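(* Let $\Xi\subseteq\mathbb{R}^d$ be a Polish space with Borel $\sigma$-algebra, equipped with a norm $\|\cdot\|$, and let $\boldsymbol{\xi}_1,\boldsymbol{\xi}_2,\dots$ be independent $\Xi$-valued random variables, $\boldsymbol{\xi}_i$ having distribution $\mathbb{P}_i$. Let $\rho:\mathbb{R}_+\to\mathbb{R}_+$ with $\rho(0)=0$ satisfy $W(\mathbb{P}_i,\mathbb{P}_{i+k})\le\rho(k)$ for all $i\ge1$, $k\ge0$. Let $\mathcal{X}\subseteq\mathbb{R}^n$, $g:\mathbb{R}^n\times\mathbb{R}^d\to\mathbb{R}$ with $g(x,\cdot)$ measurable for every $x$, $\epsilon\in[0,1]$, $\alpha\in[0,1]$, $\gamma>0$, $N$ a positive integer and $r=(r_1,\dots,r_N)$ with $r_i>0$. Suppose there is $L\in(0,\infty)$ with $|g(x,\xi)-g(y,\xi)|\le L\|x-y\|_\infty$ for all $x,y\in\mathcal{X}$, $\xi\in\Xi$, and there is $D\in(0,\infty)$ with $\sup\{\|x-y\|_\infty:x,y\in\mathcal{X}\}\le D$. Define $U_{r_i}(\boldsymbol{\xi}_i):=\{u\in\Xi:\|u-\boldsymbol{\xi}_i\|\le r_i\}$, $$\widehat v^r_\gamma(x):=\frac1N\sum_{i=1}^N\mathbb{1}\{\exists\,u\in U_{r_i}(\boldsymbol{\xi}_i)\text{ with }g(x,u)+\gamma>0\},\qquad \widehat{\mathcal{X}}^r_{\alpha,\gamma}:=\{x\in\mathcal{X}:\widehat v^r_\gamma(x)\le\alpha\},$$ and $\mathcal{X}^{N+1}_\epsilon:=\{x\in\mathcal{X}:\mathbb{P}(g(x,\boldsymbol{\xi}_{N+1})>0)\le\epsilon\}$.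 Then $$\mathbb{P}\big(\widehat{\mathcal{X}}^r_{\alpha,\gamma}\not\subseteq\mathcal{X}^{N+1}_\epsilon\big)\le\left(\frac{LD}{\gamma}+1\right)^n\Psi(\alpha N;p_1,\dots,p_N),\qquad p_i:=\left(\epsilon-\frac{\rho(N+1-i)}{r_i}\right)_+,\ i=1,\dots,N.$$
   Context: The 1-Wasserstein distance between probability measures $\mathbb{P},\mathbb{P}'$ on $\Xi$ is $W(\mathbb{P},\mathbb{P}'):=\inf_{\pi\in\Pi(\mathbb{P},\mathbb{P}')}\int_{\Xi\times\Xi}\|\xi-\xi'\|\,\pi(d\xi,d\xi')$, where $\Pi(\mathbb{P},\mathbb{P}')$ is the set of couplings with marginals $\mathbb{P},\mathbb{P}'$. $(x)_+=\max\{0,x\}$; $\mathbb{1}\{\cdot\}$ is the indicator function. For $q_1,\dots,q_N\in[0,1]$, $\Psi(z;q_1,\dots,q_N)$, $z\in[0,N]$, is the CDF of a Poisson binomial random variable: $\Psi(z;q_1,\dots,q_N)=\sum_{k=0}^{\lfloor z\rfloor}\sum_{A\subseteq[N],|A|=k}\prod_{i\in A}q_i\prod_{i\notin A}(1-q_i)$. *)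

theory Defs
  imports "HOL-Analysis.Analysis" "HOL-Probability.Probability"
begin

definition is_norm :: "('a::real_vector \<Rightarrow> real) \<Rightarrow> bool" where
  "is_norm nrm \<longleftrightarrow> (\<forall>x. 0 \<le> nrm x) \<and> (\<forall>x. nrm x = 0 \<longleftrightarrow> x = 0)
     \<and> (\<forall>x y. nrm (x + y) \<le> nrm x + nrm y) \<and> (\<forall>c x. nrm (c *\<^sub>R x) = \<bar>c\<bar> * nrm x)"

definition polish_subset :: "'a::topological_space set \<Rightarrow> bool" where
  "polish_subset S \<longleftrightarrow> completely_metrizable_space (top_of_set S) \<and> separable_space (top_of_set S)"

definition couplings :: "'a::topological_space measure \<Rightarrow> 'a measure \<Rightarrow> ('a \<times> 'a) measure set" where
  "couplings P Q = {\<pi>. prob_space \<pi> \<and> sets \<pi> = sets (borel \<Otimes>\<^sub>M borel)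
       \<and> distr \<pi> borel fst = P \<and> distr \<pi> borel snd = Q}"

definition wasserstein1 :: "('a::{real_vector,topological_space} \<Rightarrow> real) \<Rightarrow> 'a measure \<Rightarrow> 'a measure \<Rightarrow> ennreal" where
  "wasserstein1 nrm P Q = (INF \<pi>\<in>couplings P Q. \<integral>\<^sup>+ z. ennreal (nrm (fst z - snd z)) \<partial>\<pi>)"

definition poisson_binomial_cdf :: "nat \<Rightarrow> (nat \<Rightarrow> real) \<Rightarrow> real \<Rightarrow> real" where
  "poisson_binomial_cdf N q z =
     (\<Sum>k\<in>{0..nat \<lfloor>z\<rfloor>}. \<Sum>A\<in>{A. A \<subseteq> {1..N} \<and> card A = k}.
        (\<Prod>i\<in>A. q i) * (\<Prod>i\<in>{1..N} - A. 1 - q i))"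

end

theory Submission
  imports Defs
begin

text \<open>
  Cover the violating set \<open>X - X\<^sub>\<epsilon>\<close> by at most \<open>(L D / \<gamma> + 1)\<^sup>n\<close> points \<open>x\<^sub>0\<close> whose
  sup-norm balls of radius \<open>\<gamma> / L\<close> cover it (one per cell of a grid). By the Lipschitz bound,
  if some \<open>x\<close> in such a ball passes the robust scenario test, then at most \<open>\<alpha> N\<close> of the
  samples \<open>\<xi>\<^sub>i\<close> fall into the open \<open>r\<^sub>i\<close>-thickening of \<open>{u \<in> \<Xi>. g x\<^sub>0 u > 0}\<close>. These
  events are independent, and since \<open>x\<^sub>0\<close> violates the chance constraint, Markov's inequality
  for the transport cost of a near-optimal coupling of \<open>P\<^sub>i\<close> and \<open>P\<^sub>N\<^sub>+\<^sub>1\<close> shows that each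
  has probability at least \<open>\<epsilon> - \<rho>(N + 1 - i) / r\<^sub>i\<close>. Raising success probabilities only
  lowers the probability of at most \<open>\<alpha> N\<close> successes, so every \<open>x\<^sub>0\<close> contributes at most
  \<open>\<Psi>(\<alpha> N; p)\<close>, and a union bound over the \<open>x\<^sub>0\<close> concludes.
\<close>

lemma polish_subset_imp_borel:
  fixes S :: "'a::{metric_space,second_countable_topology} set"
  assumes "polish_subset S"
  shows "S \<in> sets borel"
proof -
  have "gdelta_in euclidean S"
    using assms by (intro completely_metrizable_space_imp_gdelta_in)
      (auto simp: polish_subset_def metrizable_space_euclidean)
  then obtain C :: "nat \<Rightarrow> 'a set" where C: "\<forall>n. openin euclidean (C n)" "\<Inter>(range C) = S"
    unfolding gdelta_in_descending by blast
  have "\<Inter>(range C) \<in> sets borel"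
    using C by (intro sets.countable_INT') auto
  then show ?thesis
    using C by simp
qed

section \<open>Norms and open thickenings\<close>

lemma is_norm_zero: "is_norm nrm \<Longrightarrow> nrm 0 = 0"
  by (simp add: is_norm_def)

lemma is_norm_commute:
  assumes "is_norm nrm"
  shows "nrm (x - y) = nrm (y - x)"
  using assms unfolding is_norm_def
  by (metis abs_minus_cancel minus_diff_eq scaleR_minus_left scaleR_one)

lemma is_norm_sum:
  assumes "is_norm nrm"
  shows "nrm (\<Sum>b\<in>B. f b) \<le> (\<Sum>b\<in>B. nrm (f b))"
proof (induction B rule: infinite_finite_induct)
  case (insert x F)
  then show ?case
    using assms unfolding is_norm_def by (smt (verit) sum.insert)
qed (use is_norm_zero[OF assms] in auto)

lemma is_norm_le_norm:
  fixes nrm :: "'a::euclidean_space \<Rightarrow> real"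
  assumes "is_norm nrm"
  shows "nrm x \<le> (\<Sum>b\<in>Basis. nrm b) * norm x"
proof -
  have "nrm x = nrm (\<Sum>b\<in>Basis. (x \<bullet> b) *\<^sub>R b)"
    by (simp add: euclidean_representation)
  also have "\<dots> \<le> (\<Sum>b\<in>Basis. \<bar>x \<bullet> b\<bar> * nrm b)"
    using is_norm_sum[OF assms, of "\<lambda>b. (x \<bullet> b) *\<^sub>R b" Basis] assms
    by (simp add: is_norm_def)
  also have "\<dots> \<le> (\<Sum>b\<in>Basis. norm x * nrm b)"
    using assms by (intro sum_mono mult_right_mono) (simp_all add: is_norm_def Basis_le_norm)
  also have "\<dots> = (\<Sum>b\<in>Basis. nrm b) * norm x"
    by (simp add: sum_distrib_left mult.commute)
  finally show ?thesis .
qed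

lemma is_norm_lipschitz:
  fixes nrm :: "'a::euclidean_space \<Rightarrow> real"
  assumes "is_norm nrm"
  shows "(\<Sum>b\<in>Basis. nrm b)-lipschitz_on UNIV nrm"
proof (rule lipschitz_onI)
  fix x y :: 'a
  have "nrm x \<le> nrm (x - y) + nrm y" "nrm y \<le> nrm (y - x) + nrm x"
    using assms unfolding is_norm_def by (metis diff_add_cancel)+
  moreover have "nrm (x - y) \<le> (\<Sum>b\<in>Basis. nrm b) * dist x y"
    using is_norm_le_norm[OF assms] by (simp add: dist_norm)
  ultimately show "dist (nrm x) (nrm y) \<le> (\<Sum>b\<in>Basis. nrm b) * dist x y"
    using is_norm_commute[OF assms, of x y] by (simp add: dist_real_def)
qed (use assms in \<open>auto simp: is_norm_def intro: sum_nonneg\<close>)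

lemma continuous_on_is_norm:
  fixes nrm :: "'a::euclidean_space \<Rightarrow> real"
  assumes "is_norm nrm"
  shows "continuous_on S nrm"
  using lipschitz_on_continuous_on[OF is_norm_lipschitz[OF assms]] continuous_on_subset by blast

definition thickening :: "('a::real_vector \<Rightarrow> real) \<Rightarrow> real \<Rightarrow> 'a set \<Rightarrow> 'a set" where
  "thickening nrm r G = {z. \<exists>u\<in>G. nrm (u - z) < r}"

lemma open_thickening:
  fixes nrm :: "'a::euclidean_space \<Rightarrow> real"
  assumes "is_norm nrm"
  shows "open (thickening nrm r G)"
proof -
  have "continuous_on UNIV (\<lambda>z. nrm (u - z))" for u
    by (intro continuous_on_compose2[OF continuous_on_is_norm[OF assms]] continuous_intros) auto
  then have "open {z. nrm (u - z) < r}" for u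
    by (intro open_Collect_less) auto
  moreover have "thickening nrm r G = (\<Union>u\<in>G. {z. nrm (u - z) < r})"
    unfolding thickening_def by auto
  ultimately show ?thesis by auto
qed

lemma card_thickening_hits_le:
  fixes g :: "'a \<Rightarrow> 'b::real_vector \<Rightarrow> real"
  assumes "finite I" and close: "\<And>u. u \<in> Xi \<Longrightarrow> \<bar>g x u - g x0 u\<bar> \<le> \<gamma>"
  shows "card {i\<in>I. z i \<in> thickening nrm (r i) (Xi \<inter> {u. 0 < g x0 u})}
           \<le> card {i\<in>I. \<exists>u\<in>{u \<in> Xi. nrm (u - z i) \<le> r i}. g x u + \<gamma> > 0}"
    (is "card ?hits \<le> card ?robust_hits")
proof (rule card_mono)
  show "?hits \<subseteq> ?robust_hits"
  proof
    fix i assume "i \<in> ?hits"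
    then obtain u where "i \<in> I" and u: "u \<in> Xi" "0 < g x0 u" "nrm (u - z i) < r i"
      by (auto simp: thickening_def)
    moreover have "g x u + \<gamma> > 0"
      using abs_le_D2[OF close[OF u(1)]] u(2) by linarith
    ultimately show "i \<in> ?robust_hits"
      by force
  qed
qed (use assms(1) in simp)

lemma card_thickening_hits_le_floor:
  fixes g :: "'a \<Rightarrow> 'b::real_vector \<Rightarrow> real"
  assumes N: "N \<ge> 1" and close: "\<And>u. u \<in> Xi \<Longrightarrow> \<bar>g x u - g x0 u\<bar> \<le> \<gamma>"
    and robust: "1 / real N *
      (\<Sum>i\<in>{1..N}. if \<exists>u\<in>{u \<in> Xi. nrm (u - z i) \<le> r i}. g x u + \<gamma> > 0 then 1 else 0) \<le> \<alpha>"
  shows "card {i\<in>{1..N}. z i \<in> thickening nrm (r i) (Xi \<inter> {u. 0 < g x0 u})} \<le> nat \<lfloor>\<alpha> * real N\<rfloor>"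
    (is "card ?hits \<le> _")
proof (rule le_nat_floor)
  have "real (card ?hits) \<le> real (card {i\<in>{1..N}. \<exists>u\<in>{u \<in> Xi. nrm (u - z i) \<le> r i}. g x u + \<gamma> > 0})"
    using close by (intro of_nat_mono card_thickening_hits_le) auto
  also have "\<dots> \<le> \<alpha> * real N"
    using robust N by (simp add: sum.inter_filter[symmetric] divide_le_eq)
  finally show "real (card ?hits) \<le> \<alpha> * real N" .
qed

section \<open>Wasserstein distance and thickenings\<close>

lemma (in finite_measure) measure_ge_le_nn_integral:
  assumes f: "f \<in> borel_measurable M" and int: "(\<integral>\<^sup>+ x. ennreal (f x) \<partial>M) \<le> ennreal c"
    and c: "c \<ge> 0" and r: "r > 0"
  shows "measure M {x \<in> space M. r \<le> f x} \<le> c / r"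
proof -
  let ?A = "{x \<in> space M. r \<le> f x}"
  have A: "?A \<in> sets M"
    using f by measurable
  have "ennreal r * emeasure M ?A = (\<integral>\<^sup>+ x. ennreal r * indicator ?A x \<partial>M)"
    using A by (simp add: nn_integral_cmult_indicator)
  also have "\<dots> \<le> (\<integral>\<^sup>+ x. ennreal (f x) \<partial>M)"
    by (intro nn_integral_mono) (auto simp: indicator_def ennreal_leI)
  finally have "ennreal (r * measure M ?A) \<le> ennreal c"
    using r by (simp add: emeasure_eq_measure ennreal_mult order.trans[OF _ int])
  then have "r * measure M ?A \<le> c"
    using c by simp
  then show ?thesis
    using r by (simp add: pos_le_divide_eq mult.commute)
qed

lemma coupling_measure_le_thickening:
  fixes nrm :: "'a::euclidean_space \<Rightarrow> real"
  assumes \<pi>: "\<pi> \<in> couplings P Q" and nrm: "is_norm nrm"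
    and cost: "(\<integral>\<^sup>+ z. ennreal (nrm (fst z - snd z)) \<partial>\<pi>) \<le> ennreal c"
    and c: "c \<ge> 0" and r: "r > 0" and G: "G \<in> sets borel"
  shows "measure Q G \<le> measure P (thickening nrm r G) + c / r"
proof -
  interpret \<pi>: prob_space \<pi>
    using \<pi> by (simp add: couplings_def)
  have sets_prod: "sets \<pi> = sets (borel \<Otimes>\<^sub>M borel)"
    using \<pi> by (simp add: couplings_def)
  then have sets_\<pi>: "sets \<pi> = sets (borel :: ('a \<times> 'a) measure)"
    unfolding borel_prod .
  have P: "P = distr \<pi> borel fst" and Q: "Q = distr \<pi> borel snd"
    using \<pi> by (simp_all add: couplings_def)
  have [measurable]: "fst \<in> borel_measurable \<pi>" "snd \<in> borel_measurable \<pi>"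
    unfolding measurable_cong_sets[OF sets_prod refl] by simp_all
  define far where "far = {z \<in> space \<pi>. r \<le> nrm (fst z - snd z)}"
  have "continuous_on UNIV (\<lambda>z::'a \<times> 'a. nrm (fst z - snd z))"
    by (intro continuous_on_compose2[OF continuous_on_is_norm[OF nrm]] continuous_intros) auto
  then have cost_measurable: "(\<lambda>z. nrm (fst z - snd z)) \<in> borel_measurable \<pi>"
    using measurable_cong_sets[OF sets_\<pi> refl] borel_measurable_continuous_onI by blast
  then have far_event: "far \<in> \<pi>.events"
    unfolding far_def by measurable
  have far_le: "measure \<pi> far \<le> c / r"
    unfolding far_def by (rule \<pi>.measure_ge_le_nn_integral[OF cost_measurable cost c r])
  define near where "near = fst -` thickening nrm r G \<inter> space \<pi>"
  have near_event: "near \<in> \<pi>.events"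
    unfolding near_def using open_thickening[OF nrm] by measurable
  have "snd -` G \<inter> space \<pi> \<subseteq> near \<union> far"
  proof
    fix z assume z: "z \<in> snd -` G \<inter> space \<pi>"
    show "z \<in> near \<union> far"
    proof (cases "r \<le> nrm (fst z - snd z)")
      case False
      then have "nrm (snd z - fst z) < r"
        using is_norm_commute[OF nrm] by (metis not_le)
      then show ?thesis
        using z by (auto simp: near_def thickening_def)
    qed (use z in \<open>simp add: far_def\<close>)
  qed
  then have "measure \<pi> (snd -` G \<inter> space \<pi>) \<le> measure \<pi> (near \<union> far)"
    using near_event far_event by (intro \<pi>.finite_measure_mono) auto
  also have "\<dots> \<le> measure \<pi> near + measure \<pi> far"
    using near_event far_event by (intro measure_Un_le) auto
  finally have "measure \<pi> (snd -` G \<inter> space \<pi>) \<le> measure \<pi> near + measure \<pi> far" .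
  moreover have "measure Q G = measure \<pi> (snd -` G \<inter> space \<pi>)"
    unfolding Q using G by (simp add: measure_distr)
  moreover have "measure P (thickening nrm r G) = measure \<pi> near"
    unfolding P near_def using open_thickening[OF nrm] by (simp add: measure_distr)
  ultimately show ?thesis
    using far_le by linarith
qed

lemma wasserstein1_measure_le_thickening:
  fixes nrm :: "'a::euclidean_space \<Rightarrow> real"
  assumes nrm: "is_norm nrm" and W: "wasserstein1 nrm P Q \<le> ennreal w"
    and w: "w \<ge> 0" and r: "r > 0" and G: "G \<in> sets borel"
  shows "measure Q G \<le> measure P (thickening nrm r G) + w / r"
proof (rule field_le_epsilon)
  fix e :: real assume e: "e > 0"
  have "wasserstein1 nrm P Q < ennreal (w + e * r)"
    using w mult_pos_pos[OF e r] by (intro order.strict_trans1[OF W ennreal_lessI]) auto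
  then obtain \<pi> where \<pi>: "\<pi> \<in> couplings P Q"
    and cost: "(\<integral>\<^sup>+ z. ennreal (nrm (fst z - snd z)) \<partial>\<pi>) < ennreal (w + e * r)"
    unfolding wasserstein1_def by (auto simp: INF_less_iff)
  have "measure Q G \<le> measure P (thickening nrm r G) + (w + e * r) / r"
    using w e r
    by (intro coupling_measure_le_thickening[OF \<pi> nrm _ _ r G] less_imp_le[OF cost]) auto
  then show "measure Q G \<le> measure P (thickening nrm r G) + w / r + e"
    using r by (simp add: add_divide_distrib)
qed

lemma (in prob_space) prob_thickening_ge_wasserstein1:
  fixes nrm :: "'b::euclidean_space \<Rightarrow> real"
  assumes nrm: "is_norm nrm" and X: "X \<in> borel_measurable M" and Y: "Y \<in> borel_measurable M"
    and W: "wasserstein1 nrm (distr M borel X) (distr M borel Y) \<le> ennreal w"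
    and w: "w \<ge> 0" and r: "r > 0" and G: "G \<in> sets borel"
  shows "prob {\<omega> \<in> space M. Y \<omega> \<in> G} - w / r \<le> prob {\<omega> \<in> space M. X \<omega> \<in> thickening nrm r G}"
proof -
  have "{\<omega> \<in> space M. Y \<omega> \<in> G} = Y -` G \<inter> space M"
    and "{\<omega> \<in> space M. X \<omega> \<in> thickening nrm r G} = X -` thickening nrm r G \<inter> space M"
    by auto
  then show ?thesis
    using wasserstein1_measure_le_thickening[OF nrm W w r G] open_thickening[OF nrm] G X Y
    by (simp add: measure_distr)
qed

section \<open>Poisson binomial distribution\<close>

definition poisson_binomial_weight :: "'a set \<Rightarrow> ('a \<Rightarrow> real) \<Rightarrow> 'a set \<Rightarrow> real" where
  "poisson_binomial_weight T q K = (\<Prod>i\<in>K. q i) * (\<Prod>i\<in>T - K. 1 - q i)"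

definition poisson_binomial_prob :: "'a set \<Rightarrow> ('a \<Rightarrow> real) \<Rightarrow> (nat \<Rightarrow> bool) \<Rightarrow> real" where
  "poisson_binomial_prob T q P =
     (\<Sum>K\<in>Pow T. if P (card K) then poisson_binomial_weight T q K else 0)"

lemma poisson_binomial_weight_nonneg:
  "(\<And>i. i \<in> T \<Longrightarrow> 0 \<le> q i \<and> q i \<le> 1) \<Longrightarrow> K \<subseteq> T \<Longrightarrow> 0 \<le> poisson_binomial_weight T q K"
  unfolding poisson_binomial_weight_def by (intro mult_nonneg_nonneg prod_nonneg) auto

lemma poisson_binomial_prob_nonneg:
  "(\<And>i. i \<in> T \<Longrightarrow> 0 \<le> q i \<and> q i \<le> 1) \<Longrightarrow> 0 \<le> poisson_binomial_prob T q P"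
  unfolding poisson_binomial_prob_def
  by (intro sum_nonneg) (auto intro: poisson_binomial_weight_nonneg)

lemma poisson_binomial_prob_mono_pred:
  "(\<And>i. i \<in> T \<Longrightarrow> 0 \<le> q i \<and> q i \<le> 1) \<Longrightarrow> (\<And>k. Q k \<Longrightarrow> P k) \<Longrightarrow>
    poisson_binomial_prob T q Q \<le> poisson_binomial_prob T q P"
  unfolding poisson_binomial_prob_def
  by (intro sum_mono) (auto intro: poisson_binomial_weight_nonneg)

lemma poisson_binomial_prob_insert:
  assumes "finite T" "j \<notin> T"
  shows "poisson_binomial_prob (insert j T) q P =
    (1 - q j) * poisson_binomial_prob T q P + q j * poisson_binomial_prob T q (\<lambda>k. P (Suc k))"
proof -
  let ?w = "poisson_binomial_weight (insert j T) q"
  let ?f = "\<lambda>K. if P (card K) then ?w K else 0"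
  have inj: "inj_on (insert j) (Pow T)"
    using assms unfolding inj_on_def by (metis PowD insert_ident subsetD)
  have without_j: "?w K = (1 - q j) * poisson_binomial_weight T q K" if "K \<subseteq> T" for K
  proof -
    have "insert j T - K = insert j (T - K)" using that assms by auto
    then show ?thesis
      unfolding poisson_binomial_weight_def using assms that by (simp add: finite_subset)
  qed
  have with_j: "?w (insert j K) = q j * poisson_binomial_weight T q K"
    and card_with_j: "card (insert j K) = Suc (card K)" if "K \<subseteq> T" for K
  proof -
    have "insert j T - insert j K = T - K" "j \<notin> K" "finite K"
      using that assms by (auto simp: finite_subset)
    then show "?w (insert j K) = q j * poisson_binomial_weight T q K"
      and "card (insert j K) = Suc (card K)"
      unfolding poisson_binomial_weight_def using assms that by (simp_all add: finite_subset)
  qed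
  have "poisson_binomial_prob (insert j T) q P = sum ?f (Pow T) + sum ?f (insert j ` Pow T)"
    unfolding poisson_binomial_prob_def Pow_insert using assms by (intro sum.union_disjoint) auto
  also have "sum ?f (Pow T) = (1 - q j) * poisson_binomial_prob T q P"
    unfolding poisson_binomial_prob_def sum_distrib_left by (intro sum.cong) (auto simp: without_j)
  also have "sum ?f (insert j ` Pow T) = sum (?f \<circ> insert j) (Pow T)"
    by (rule sum.reindex[OF inj])
  also have "\<dots> = q j * poisson_binomial_prob T q (\<lambda>k. P (Suc k))"
    unfolding poisson_binomial_prob_def sum_distrib_left
    by (intro sum.cong) (auto simp: with_j card_with_j)
  finally show ?thesis .
qed

text \<open>By induction on the trials: conditioning on trial \<open>j\<close> reduces the claim to
  \<open>(1 - q) a + q b \<le> (1 - p) a + p b\<close> for \<open>p \<le> q\<close>, where \<open>b \<le> a\<close> because \<open>P\<close> is downward closed.\<close>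
lemma poisson_binomial_prob_antimono:
  assumes "finite T" "\<And>i. i \<in> T \<Longrightarrow> 0 \<le> p i \<and> p i \<le> q i \<and> q i \<le> 1"
    and "\<And>k k'. P k \<Longrightarrow> k' \<le> k \<Longrightarrow> P k'"
  shows "poisson_binomial_prob T q P \<le> poisson_binomial_prob T p P"
  using assms
proof (induction T arbitrary: P rule: finite_induct)
  case empty
  show ?case
    unfolding poisson_binomial_prob_def poisson_binomial_weight_def by (simp only: Pow_empty) simp
next
  case (insert j T)
  define aq where "aq = poisson_binomial_prob T q P"
  define bq where "bq = poisson_binomial_prob T q (\<lambda>k. P (Suc k))"
  define ap where "ap = poisson_binomial_prob T p P"
  define bp where "bp = poisson_binomial_prob T p (\<lambda>k. P (Suc k))"
  have "aq \<le> ap" "bq \<le> bp"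
    unfolding aq_def ap_def bq_def bp_def using insert.prems by (auto intro!: insert.IH)
  moreover have "bp \<le> ap"
    unfolding bp_def ap_def using insert.prems
    by (intro poisson_binomial_prob_mono_pred) (force, blast intro: le_SucI)
  moreover have "0 \<le> p j" "p j \<le> q j" "q j \<le> 1"
    using insert.prems(1) by auto
  ultimately have "(1 - q j) * aq \<le> (1 - q j) * ap" "q j * bq \<le> q j * bp"
    and "0 \<le> (q j - p j) * (ap - bp)"
    by (auto intro: mult_left_mono)
  then have "(1 - q j) * aq + q j * bq \<le> (1 - p j) * ap + p j * bp"
    by (simp add: algebra_simps)
  then show ?case
    unfolding poisson_binomial_prob_insert[OF insert.hyps] aq_def bq_def ap_def bp_def .
qed

lemma poisson_binomial_cdf_eq_prob:
  "poisson_binomial_cdf N q z = poisson_binomial_prob {1..N} q (\<lambda>k. k \<le> nat \<lfloor>z\<rfloor>)"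
proof -
  let ?w = "poisson_binomial_weight {1..N} q"
  have "poisson_binomial_prob {1..N} q (\<lambda>k. k \<le> nat \<lfloor>z\<rfloor>) = sum ?w {K\<in>Pow {1..N}. card K \<le> nat \<lfloor>z\<rfloor>}"
    unfolding poisson_binomial_prob_def by (subst sum.inter_filter[symmetric]) auto
  also have "{K\<in>Pow {1..N}. card K \<le> nat \<lfloor>z\<rfloor>} = (\<Union>k\<in>{0..nat \<lfloor>z\<rfloor>}. {A. A \<subseteq> {1..N} \<and> card A = k})"
    by auto
  also have "sum ?w \<dots> = (\<Sum>k\<in>{0..nat \<lfloor>z\<rfloor>}. sum ?w {A. A \<subseteq> {1..N} \<and> card A = k})"
    by (intro sum.UNION_disjoint) auto
  finally show ?thesis
    unfolding poisson_binomial_cdf_def poisson_binomial_weight_def by simp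
qed

lemma poisson_binomial_cdf_nonneg:
  "(\<And>i. i \<in> {1..N} \<Longrightarrow> 0 \<le> q i \<and> q i \<le> 1) \<Longrightarrow> 0 \<le> poisson_binomial_cdf N q z"
  unfolding poisson_binomial_cdf_eq_prob by (rule poisson_binomial_prob_nonneg)

section \<open>Number of occurring independent events\<close>

context prob_space
begin

lemma events_Collect_eq_set:
  assumes "finite T" "\<And>i. i \<in> T \<Longrightarrow> {\<omega> \<in> space M. Q i \<omega>} \<in> events"
  shows "{\<omega> \<in> space M. {i\<in>T. Q i \<omega>} = K} \<in> events"
proof -
  have "{\<omega> \<in> space M. Q i \<omega> \<longleftrightarrow> i \<in> K} \<in> events" if "i \<in> T" for i
    using assms(2)[OF that] by (cases "i \<in> K") (simp_all add: sets.sets_Collect_neg)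
  then have "{\<omega> \<in> space M. K \<subseteq> T \<and> (\<forall>i\<in>T. Q i \<omega> \<longleftrightarrow> i \<in> K)} \<in> events"
    using assms(1)
    by (intro sets.sets_Collect_conj sets.sets_Collect_const sets.sets_Collect_finite_All) auto
  also have "{\<omega> \<in> space M. K \<subseteq> T \<and> (\<forall>i\<in>T. Q i \<omega> \<longleftrightarrow> i \<in> K)} = {\<omega> \<in> space M. {i\<in>T. Q i \<omega>} = K}"
    by blast
  finally show ?thesis .
qed

lemma Collect_card_eq_UN:
  "{\<omega> \<in> space M. P (card {i\<in>T. Q i \<omega>})} =
    (\<Union>K\<in>{K\<in>Pow T. P (card K)}. {\<omega> \<in> space M. {i\<in>T. Q i \<omega>} = K})"
  by auto

lemma events_Collect_card:
  assumes "finite T" "\<And>i. i \<in> T \<Longrightarrow> {\<omega> \<in> space M. Q i \<omega>} \<in> events"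
  shows "{\<omega> \<in> space M. P (card {i\<in>T. Q i \<omega>})} \<in> events"
  unfolding Collect_card_eq_UN using assms
  by (intro sets.finite_UN events_Collect_eq_set) auto

lemma events_Collect_card_vimage:
  assumes "finite T" "\<And>i. i \<in> T \<Longrightarrow> X i \<in> borel_measurable M" "\<And>i. i \<in> T \<Longrightarrow> S i \<in> sets borel"
  shows "{\<omega> \<in> space M. P (card {i\<in>T. X i \<omega> \<in> S i})} \<in> events"
proof (rule events_Collect_card)
  fix i assume "i \<in> T"
  then have "X i -` S i \<inter> space M \<in> events"
    using assms by (intro measurable_sets) auto
  then show "{\<omega> \<in> space M. X i \<omega> \<in> S i} \<in> events"
    by (simp add: vimage_def Int_def conj_commute)
qed (use assms in simp)

lemma prob_occurrences_eq_poisson_binomial_weight: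
  assumes indep: "indep_events Y T" and T: "finite T" and K: "K \<subseteq> T"
  shows "prob {\<omega> \<in> space M. {i\<in>T. \<omega> \<in> Y i} = K} = poisson_binomial_weight T (\<lambda>i. prob (Y i)) K"
proof (cases "T = {}")
  case True
  then show ?thesis
    using K by (simp add: poisson_binomial_weight_def prob_space)
next
  case False
  define B where "B i = (if i \<in> K then Y i else space M - Y i)" for i
  have events: "Y i \<in> events" if "i \<in> T" for i
    using indep that by (auto simp: indep_events_def)
  have "indep_sets (\<lambda>i. sigma_sets (space M) {Y i}) T"
    using indep unfolding indep_events_def_alt
    by (rule indep_sets_sigma) (simp add: Int_stable_def)
  moreover have "B i \<in> sigma_sets (space M) {Y i}" for i
    unfolding B_def by (auto intro: sigma_sets.Compl)
  ultimately have "prob (\<Inter>i\<in>T. B i) = (\<Prod>i\<in>T. prob (B i))"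
    using T False by (intro indep_setsD) auto
  also have "\<dots> = (\<Prod>i\<in>T. if i \<in> K then prob (Y i) else 1 - prob (Y i))"
    unfolding B_def using events by (intro prod.cong) (auto simp: prob_compl)
  also have "\<dots> = poisson_binomial_weight T (\<lambda>i. prob (Y i)) K"
    unfolding poisson_binomial_weight_def using T K
    by (simp add: prod.If_cases Int_absorb1 Diff_eq)
  also have "(\<Inter>i\<in>T. B i) = {\<omega> \<in> space M. {i\<in>T. \<omega> \<in> Y i} = K}"
  proof (intro set_eqI iffI)
    fix \<omega> assume \<omega>: "\<omega> \<in> (\<Inter>i\<in>T. B i)"
    obtain t where t: "t \<in> T"
      using False by auto
    have "B t \<subseteq> space M"
      using sets.sets_into_space[OF events[OF t]] by (auto simp: B_def)
    then have "\<omega> \<in> space M"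
      using \<omega> t by blast
    moreover have "\<omega> \<in> Y i \<longleftrightarrow> i \<in> K" if "i \<in> T" for i
    proof -
      have "\<omega> \<in> B i"
        using \<omega> that by blast
      then show ?thesis
        by (cases "i \<in> K") (simp_all add: B_def)
    qed
    then have "{i\<in>T. \<omega> \<in> Y i} = K"
      using K by blast
    ultimately show "\<omega> \<in> {\<omega> \<in> space M. {i\<in>T. \<omega> \<in> Y i} = K}"
      by simp
  qed (auto simp: B_def)
  finally show ?thesis .
qed

lemma prob_card_occurrences:
  assumes indep: "indep_events Y T" and T: "finite T"
  shows "prob {\<omega> \<in> space M. P (card {i\<in>T. \<omega> \<in> Y i})} = poisson_binomial_prob T (\<lambda>i. prob (Y i)) P"
proof -
  have "{\<omega> \<in> space M. \<omega> \<in> Y i} \<in> events" if "i \<in> T" for i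
  proof -
    have "Y i \<in> events"
      using indep that by (auto simp: indep_events_def)
    moreover from this have "{\<omega> \<in> space M. \<omega> \<in> Y i} = Y i"
      using sets.sets_into_space by blast
    ultimately show ?thesis
      by simp
  qed
  then have "prob {\<omega> \<in> space M. P (card {i\<in>T. \<omega> \<in> Y i})} =
      (\<Sum>K\<in>{K\<in>Pow T. P (card K)}. prob {\<omega> \<in> space M. {i\<in>T. \<omega> \<in> Y i} = K})"
    unfolding Collect_card_eq_UN[of P T "\<lambda>i \<omega>. \<omega> \<in> Y i"] using T
    by (intro measure_finite_Union) (auto simp: disjoint_family_on_def events_Collect_eq_set)
  also have "\<dots> = poisson_binomial_prob T (\<lambda>i. prob (Y i)) P"
    unfolding poisson_binomial_prob_def using T indep
    by (subst sum.inter_filter[symmetric]) (auto simp: prob_occurrences_eq_poisson_binomial_weight)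
  finally show ?thesis .
qed

lemma prob_card_occurrences_le_poisson_binomial_cdf:
  assumes indep: "indep_events Y {1..N}" and p: "\<And>i. i \<in> {1..N} \<Longrightarrow> 0 \<le> p i \<and> p i \<le> prob (Y i)"
  shows "prob {\<omega> \<in> space M. card {i\<in>{1..N}. \<omega> \<in> Y i} \<le> nat \<lfloor>z\<rfloor>} \<le> poisson_binomial_cdf N p z"
proof -
  have "prob {\<omega> \<in> space M. card {i\<in>{1..N}. \<omega> \<in> Y i} \<le> nat \<lfloor>z\<rfloor>} =
      poisson_binomial_prob {1..N} (\<lambda>i. prob (Y i)) (\<lambda>k. k \<le> nat \<lfloor>z\<rfloor>)"
    by (rule prob_card_occurrences[OF indep]) simp
  also have "\<dots> \<le> poisson_binomial_prob {1..N} p (\<lambda>k. k \<le> nat \<lfloor>z\<rfloor>)"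
    using p by (intro poisson_binomial_prob_antimono) auto
  finally show ?thesis
    by (simp add: poisson_binomial_cdf_eq_prob)
qed

lemma prob_card_thickening_hits_le:
  fixes nrm :: "'b::euclidean_space \<Rightarrow> real" and \<xi> :: "nat \<Rightarrow> 'a \<Rightarrow> 'b"
  assumes nrm: "is_norm nrm"
    and indep: "indep_vars (\<lambda>_. borel) \<xi> {1..N}" and \<xi>_last: "\<xi> (N + 1) \<in> borel_measurable M"
    and W: "\<And>i. i \<in> {1..N} \<Longrightarrow>
      wasserstein1 nrm (distr M borel (\<xi> i)) (distr M borel (\<xi> (N + 1))) \<le> ennreal (w i)"
    and w: "\<And>i. i \<in> {1..N} \<Longrightarrow> 0 \<le> w i" and r: "\<And>i. i \<in> {1..N} \<Longrightarrow> 0 < r i"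
    and G: "G \<in> sets borel" and \<epsilon>: "\<epsilon> \<le> prob {\<omega> \<in> space M. \<xi> (N + 1) \<omega> \<in> G}"
  shows "prob {\<omega> \<in> space M. card {i\<in>{1..N}. \<xi> i \<omega> \<in> thickening nrm (r i) G} \<le> nat \<lfloor>z\<rfloor>}
           \<le> poisson_binomial_cdf N (\<lambda>i. max 0 (\<epsilon> - w i / r i)) z"
proof -
  define Y where "Y i = {\<omega> \<in> space M. \<xi> i \<omega> \<in> thickening nrm (r i) G}" for i
  have "indep_events Y {1..N}"
    unfolding Y_def using indep open_thickening[OF nrm] by (intro indep_eventsI_indep_vars) auto
  moreover have "0 \<le> max 0 (\<epsilon> - w i / r i) \<and> max 0 (\<epsilon> - w i / r i) \<le> prob (Y i)"
    if i: "i \<in> {1..N}" for i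
  proof -
    have "\<xi> i \<in> borel_measurable M"
      using indep i by (auto simp: indep_vars_def)
    then have "prob {\<omega> \<in> space M. \<xi> (N + 1) \<omega> \<in> G} - w i / r i \<le> prob (Y i)"
      unfolding Y_def using i by (intro prob_thickening_ge_wasserstein1[OF nrm _ \<xi>_last W w r G])
    then show ?thesis
      using \<epsilon> by auto
  qed
  ultimately have "prob {\<omega> \<in> space M. card {i\<in>{1..N}. \<omega> \<in> Y i} \<le> nat \<lfloor>z\<rfloor>}
      \<le> poisson_binomial_cdf N (\<lambda>i. max 0 (\<epsilon> - w i / r i)) z"
    by (rule prob_card_occurrences_le_poisson_binomial_cdf)
  moreover have "{\<omega> \<in> space M. card {i\<in>{1..N}. \<omega> \<in> Y i} \<le> nat \<lfloor>z\<rfloor>} =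
      {\<omega> \<in> space M. card {i\<in>{1..N}. \<xi> i \<omega> \<in> thickening nrm (r i) G} \<le> nat \<lfloor>z\<rfloor>}"
    by (auto simp: Y_def)
  ultimately show ?thesis
    by simp
qed

end

section \<open>Finite nets in the sup norm\<close>

lemma infnorm_grid_cells:
  fixes X :: "(real^'n) set"
  assumes X: "X \<noteq> {}" and s: "s > 0"
    and diam: "\<And>x y. x \<in> X \<Longrightarrow> y \<in> X \<Longrightarrow> infnorm (x - y) \<le> D"
  obtains cell :: "real^'n \<Rightarrow> ('n \<Rightarrow> nat)"
  where "\<And>x. x \<in> X \<Longrightarrow> cell x \<in> (\<Pi>\<^sub>E j\<in>UNIV. {..nat \<lfloor>D / s\<rfloor>})"
    and "\<And>x y. x \<in> X \<Longrightarrow> y \<in> X \<Longrightarrow> cell x = cell y \<Longrightarrow> infnorm (x - y) \<le> s"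
proof
  define m where "m j = Inf ((\<lambda>x. x $ j) ` X)" for j
  have coord_diam: "\<bar>x $ j - y $ j\<bar> \<le> D" if "x \<in> X" "y \<in> X" for x y j
    using component_le_infnorm_cart[of "x - y" j] diam[OF that] by simp
  have m_le: "m j \<le> x $ j" if "x \<in> X" for x j
  proof -
    have "x $ j - D \<le> y $ j" if "y \<in> X" for y
      using coord_diam[OF \<open>x \<in> X\<close> that, of j] by (simp add: abs_diff_le_iff)
    then have "bdd_below ((\<lambda>x. x $ j) ` X)"
      by (intro bdd_belowI[of _ "x $ j - D"]) auto
    then show ?thesis
      unfolding m_def using that by (auto intro: cInf_lower)
  qed
  have m_ge: "x $ j - D \<le> m j" if "x \<in> X" for x j
    unfolding m_def using X coord_diam that by (intro cInf_greatest) (auto simp: abs_diff_le_iff)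
  define cell where "cell x j = nat \<lfloor>(x $ j - m j) / s\<rfloor>" for x :: "real^'n" and j
  show "cell x \<in> (\<Pi>\<^sub>E j\<in>UNIV. {..nat \<lfloor>D / s\<rfloor>})" if "x \<in> X" for x
  proof -
    have "(x $ j - m j) / s \<le> D / s" for j
      using m_ge[OF that, of j] s by (intro divide_right_mono) auto
    then show ?thesis
      unfolding cell_def by (auto intro: nat_mono floor_mono)
  qed
  show "infnorm (x - y) \<le> s" if "x \<in> X" "y \<in> X" "cell x = cell y" for x y
  proof -
    have "\<bar>(x - y) $ j\<bar> \<le> s" for j
    proof -
      define a b where "a = (x $ j - m j) / s" and "b = (y $ j - m j) / s"
      have "0 \<le> a" "0 \<le> b"
        unfolding a_def b_def using m_le that s by auto
      moreover have "nat \<lfloor>a\<rfloor> = nat \<lfloor>b\<rfloor>"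
        using fun_cong[OF that(3), of j] unfolding cell_def a_def b_def by simp
      ultimately have "\<bar>a - b\<bar> < 1"
        by linarith
      then show ?thesis
        unfolding a_def b_def using s by (simp add: diff_divide_distrib[symmetric])
    qed
    then show ?thesis
      unfolding infnorm_cart by (intro cSup_least) auto
  qed
qed

lemma finite_infnorm_net:
  fixes Z :: "(real^'n) set"
  assumes s: "s > 0" and D: "D \<ge> 0"
    and diam: "\<And>x y. x \<in> Z \<Longrightarrow> y \<in> Z \<Longrightarrow> infnorm (x - y) \<le> D"
  obtains F where "F \<subseteq> Z" "finite F" "real (card F) \<le> (D / s + 1) ^ CARD('n)"
    and "\<And>z. z \<in> Z \<Longrightarrow> \<exists>f\<in>F. infnorm (z - f) \<le> s"
proof (cases "Z = {}")
  case True
  then show ?thesis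
    using that[of "{}"] D s by simp
next
  case False
  then obtain cell :: "real^'n \<Rightarrow> ('n \<Rightarrow> nat)"
    where cell_range: "\<And>x. x \<in> Z \<Longrightarrow> cell x \<in> (\<Pi>\<^sub>E j\<in>UNIV. {..nat \<lfloor>D / s\<rfloor>})"
      and same_cell: "\<And>x y. x \<in> Z \<Longrightarrow> y \<in> Z \<Longrightarrow> cell x = cell y \<Longrightarrow> infnorm (x - y) \<le> s"
    using infnorm_grid_cells[OF _ s diam] by blast
  define F where "F = inv_into Z cell ` cell ` Z"
  have grid: "finite (\<Pi>\<^sub>E j\<in>(UNIV::'n set). {..nat \<lfloor>D / s\<rfloor>})"
    by (intro finite_PiE) auto
  have "cell ` Z \<subseteq> (\<Pi>\<^sub>E j\<in>UNIV. {..nat \<lfloor>D / s\<rfloor>})"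
    using cell_range by auto
  then have cells_finite: "finite (cell ` Z)"
    and cells_card: "card (cell ` Z) \<le> (nat \<lfloor>D / s\<rfloor> + 1) ^ CARD('n)"
    using finite_subset[OF _ grid] card_mono[OF grid] by (auto simp: card_PiE)
  have "real (card F) \<le> real (card (cell ` Z))"
    unfolding F_def by (intro of_nat_mono card_image_le cells_finite)
  also have "\<dots> \<le> real (nat \<lfloor>D / s\<rfloor> + 1) ^ CARD('n)"
    using cells_card by (metis of_nat_le_iff of_nat_power)
  also have "\<dots> \<le> (D / s + 1) ^ CARD('n)"
  proof (rule power_mono)
    have "0 \<le> D / s"
      using D s by simp
    then show "real (nat \<lfloor>D / s\<rfloor> + 1) \<le> D / s + 1"
      by linarith
  qed simp
  finally have "real (card F) \<le> (D / s + 1) ^ CARD('n)" .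
  moreover have "F \<subseteq> Z" "finite F"
    unfolding F_def using cells_finite by (auto intro: inv_into_into)
  moreover have "\<exists>f\<in>F. infnorm (z - f) \<le> s" if z: "z \<in> Z" for z
  proof
    let ?f = "inv_into Z cell (cell z)"
    show "?f \<in> F"
      unfolding F_def using z by blast
    have "?f \<in> Z" "cell ?f = cell z"
      using z by (auto intro: inv_into_into f_inv_into_f)
    then show "infnorm (z - ?f) \<le> s"
      using same_cell[OF z] by simp
  qed
  ultimately show ?thesis
    using that by blast
qed

theorem theorem4:
  fixes M :: "'w measure"
    and Xi :: "(real^'d) set"
    and nrm :: "real^'d \<Rightarrow> real"
    and \<xi> :: "nat \<Rightarrow> 'w \<Rightarrow> real^'d"
    and \<rho> :: "real \<Rightarrow> real"
    and X :: "(real^'n) set"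
    and g :: "real^'n \<Rightarrow> real^'d \<Rightarrow> real"
    and \<epsilon> \<alpha> \<gamma> L D :: real
    and N :: nat
    and r :: "nat \<Rightarrow> real"
  assumes M: "prob_space M"
    and Xi_polish: "polish_subset Xi"
    and nrm: "is_norm nrm"
    and indep: "prob_space.indep_vars M (\<lambda>_. borel) \<xi> {1..}"
    and \<xi>_in: "\<And>i \<omega>. i \<ge> 1 \<Longrightarrow> \<omega> \<in> space M \<Longrightarrow> \<xi> i \<omega> \<in> Xi"
    and \<rho>_nonneg: "\<And>t. t \<ge> 0 \<Longrightarrow> \<rho> t \<ge> 0"
    and \<rho>0: "\<rho> 0 = 0"
    and \<rho>_bound: "\<And>i k. i \<ge> 1 \<Longrightarrow>
        wasserstein1 nrm (distr M borel (\<xi> i)) (distr M borel (\<xi> (i + k))) \<le> ennreal (\<rho> (real k))"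
    and g_meas: "\<And>x. g x \<in> borel_measurable borel"
    and \<epsilon>: "0 \<le> \<epsilon>" "\<epsilon> \<le> 1"
    and \<alpha>: "0 \<le> \<alpha>" "\<alpha> \<le> 1"
    and \<gamma>: "\<gamma> > 0"
    and N: "N \<ge> 1"
    and r_pos: "\<And>i. i \<in> {1..N} \<Longrightarrow> r i > 0"
    and L: "L > 0"
    and Lip: "\<And>x y u. x \<in> X \<Longrightarrow> y \<in> X \<Longrightarrow> u \<in> Xi \<Longrightarrow> \<bar>g x u - g y u\<bar> \<le> L * infnorm (x - y)"
    and D: "D > 0"
    and diam: "\<And>x y. x \<in> X \<Longrightarrow> y \<in> X \<Longrightarrow> infnorm (x - y) \<le> D"
  shows
    "let U = (\<lambda>i \<omega>. {u \<in> Xi. nrm (u - \<xi> i \<omega>) \<le> r i});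
         v = (\<lambda>x \<omega>. (1 / real N) * (\<Sum>i\<in>{1..N}. if \<exists>u\<in>U i \<omega>. g x u + \<gamma> > 0 then 1 else 0));
         Xhat = (\<lambda>\<omega>. {x \<in> X. v x \<omega> \<le> \<alpha>});
         Xeps = {x \<in> X. measure M {\<omega> \<in> space M. g x (\<xi> (N + 1) \<omega>) > 0} \<le> \<epsilon>};
         p = (\<lambda>i. max 0 (\<epsilon> - \<rho> (real (N + 1 - i)) / r i))
     in \<exists>A \<in> sets M. {\<omega> \<in> space M. \<not> Xhat \<omega> \<subseteq> Xeps} \<subseteq> A \<and>
          measure M A \<le> (L * D / \<gamma> + 1) ^ CARD('n) * poisson_binomial_cdf N p (\<alpha> * real N)"
proof -
  interpret prob_space M by fact
  define U where "U = (\<lambda>i \<omega>. {u \<in> Xi. nrm (u - \<xi> i \<omega>) \<le> r i})"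
  define v where "v = (\<lambda>x \<omega>. (1 / real N) * (\<Sum>i\<in>{1..N}. if \<exists>u\<in>U i \<omega>. g x u + \<gamma> > 0 then 1 else 0))"
  define Xhat where "Xhat = (\<lambda>\<omega>. {x \<in> X. v x \<omega> \<le> \<alpha>})"
  define Xeps where "Xeps = {x \<in> X. prob {\<omega> \<in> space M. g x (\<xi> (N + 1) \<omega>) > 0} \<le> \<epsilon>}"
  define p where "p = (\<lambda>i. max 0 (\<epsilon> - \<rho> (real (N + 1 - i)) / r i))"
  define Psi where "Psi = poisson_binomial_cdf N p (\<alpha> * real N)"
  define s where "s = \<gamma> / L"
  define G where "G x0 = Xi \<inter> {u. 0 < g x0 u}" for x0
  define bad where "bad x0 =
    {\<omega> \<in> space M. card {i\<in>{1..N}. \<xi> i \<omega> \<in> thickening nrm (r i) (G x0)} \<le> nat \<lfloor>\<alpha> * real N\<rfloor>}" for x0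
  have \<xi>_meas: "\<xi> i \<in> borel_measurable M" if "i \<ge> 1" for i
    using indep that unfolding indep_vars_def2 by auto
  have G_borel: "G x0 \<in> sets borel" for x0
    unfolding G_def using polish_subset_imp_borel[OF Xi_polish] g_meas by measurable
  have bad_event: "bad x0 \<in> events" for x0
    unfolding bad_def using \<xi>_meas open_thickening[OF nrm]
    by (intro events_Collect_card_vimage) auto
  have bad_prob: "prob (bad x0) \<le> Psi" if "x0 \<in> X - Xeps" for x0
  proof -
    have "{\<omega> \<in> space M. g x0 (\<xi> (N + 1) \<omega>) > 0} = {\<omega> \<in> space M. \<xi> (N + 1) \<omega> \<in> G x0}"
      using \<xi>_in[of "N + 1"] by (auto simp: G_def)
    then have "\<epsilon> \<le> prob {\<omega> \<in> space M. \<xi> (N + 1) \<omega> \<in> G x0}"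
      using that by (auto simp: Xeps_def)
    moreover have "wasserstein1 nrm (distr M borel (\<xi> i)) (distr M borel (\<xi> (N + 1)))
        \<le> ennreal (\<rho> (real (N + 1 - i)))" if "i \<in> {1..N}" for i
      using \<rho>_bound[of i "N + 1 - i"] that by auto
    moreover have "indep_vars (\<lambda>_. borel) \<xi> {1..N}"
      using indep by (rule indep_vars_subset) auto
    ultimately show ?thesis
      unfolding bad_def Psi_def p_def using \<xi>_meas r_pos \<rho>_nonneg G_borel
      by (intro prob_card_thickening_hits_le[OF nrm, where w="\<lambda>i. \<rho> (real (N + 1 - i))"]) auto
  qed
  have bad_cover: "\<omega> \<in> bad x0"
    if "x0 \<in> X" "x \<in> Xhat \<omega>" "infnorm (x - x0) \<le> s" "\<omega> \<in> space M" for x0 x \<omega>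
  proof -
    have "x \<in> X"
      using that(2) by (simp add: Xhat_def)
    have close: "\<bar>g x u - g x0 u\<bar> \<le> \<gamma>" if "u \<in> Xi" for u
      using Lip[OF \<open>x \<in> X\<close> \<open>x0 \<in> X\<close> that] \<open>infnorm (x - x0) \<le> s\<close> L
      by (simp add: s_def pos_le_divide_eq mult.commute)
    have "card {i\<in>{1..N}. \<xi> i \<omega> \<in> thickening nrm (r i) (G x0)} \<le> nat \<lfloor>\<alpha> * real N\<rfloor>"
      unfolding G_def
      by (rule card_thickening_hits_le_floor[where g=g and x=x and x0=x0, OF N close])
        (use that(2) in \<open>simp_all add: Xhat_def v_def U_def\<close>)
    then show ?thesis
      using that(4) by (simp add: bad_def)
  qed
  have Psi_nonneg: "0 \<le> Psi"
    unfolding Psi_def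
  proof (rule poisson_binomial_cdf_nonneg)
    fix i assume "i \<in> {1..N}"
    then have "0 \<le> \<rho> (real (N + 1 - i)) / r i"
      using \<rho>_nonneg[of "real (N + 1 - i)"] r_pos[of i] by simp
    then show "0 \<le> p i \<and> p i \<le> 1"
      using \<epsilon> by (auto simp: p_def)
  qed
  obtain F where F: "F \<subseteq> X - Xeps" "finite F" "real (card F) \<le> (D / s + 1) ^ CARD('n)"
    and F_net: "\<And>x. x \<in> X - Xeps \<Longrightarrow> \<exists>x0\<in>F. infnorm (x - x0) \<le> s"
    using finite_infnorm_net[of s D "X - Xeps"] \<gamma> L D diam unfolding s_def by auto
  have "\<exists>A \<in> events. {\<omega> \<in> space M. \<not> Xhat \<omega> \<subseteq> Xeps} \<subseteq> A \<and> prob A \<le> (L * D / \<gamma> + 1) ^ CARD('n) * Psi"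
  proof (intro bexI conjI)
    show "{\<omega> \<in> space M. \<not> Xhat \<omega> \<subseteq> Xeps} \<subseteq> (\<Union>x0\<in>F. bad x0)"
    proof
      fix \<omega> assume "\<omega> \<in> {\<omega> \<in> space M. \<not> Xhat \<omega> \<subseteq> Xeps}"
      then obtain x where \<omega>: "\<omega> \<in> space M" and x: "x \<in> Xhat \<omega>" "x \<notin> Xeps"
        by blast
      then obtain x0 where "x0 \<in> F" "infnorm (x - x0) \<le> s"
        using F_net by (force simp: Xhat_def)
      then show "\<omega> \<in> (\<Union>x0\<in>F. bad x0)"
        using bad_cover[OF _ x(1) _ \<omega>] F(1) by blast
    qed
    have "prob (\<Union>x0\<in>F. bad x0) \<le> (\<Sum>x0\<in>F. prob (bad x0))"
      using F bad_event by (intro measure_UNION_le) auto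
    also have "\<dots> \<le> real (card F) * Psi"
      using F bad_prob sum_bounded_above[of F "\<lambda>x0. prob (bad x0)" Psi] by auto
    also have "\<dots> \<le> (L * D / \<gamma> + 1) ^ CARD('n) * Psi"
      using F(3) Psi_nonneg by (intro mult_right_mono) (simp_all add: s_def mult.commute)
    finally show "prob (\<Union>x0\<in>F. bad x0) \<le> (L * D / \<gamma> + 1) ^ CARD('n) * Psi" .
    show "(\<Union>x0\<in>F. bad x0) \<in> events"
      using F bad_event by auto
  qed
  then show ?thesis
    unfolding Let_def U_def v_def Xhat_def Xeps_def p_def Psi_def by simp
qed

end
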